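(* For every topology $\mathcal{T}$ on $[n]$, $$\mathcal{P}_s(\mathcal{T})=\bigsqcup_{f\in\mathcal{L}(\mathcal{T})}\{g\mid g\leq f\}=\bigsqcup_{f\in\mathcal{L}(\mathcal{T})}\mathcal{P}_s(\mathcal{T}_f),$$ the unions being disjoint.
   Context: $[n]=\{1,\ldots,n\}$. For a topology $\mathcal{T}$ on $[n]$: $i\leq_{\mathcal{T}}j$ iff every open set containing $i$ contains $j$; $i\sim_{\mathcal{T}}j$ iff $i\leq_{\mathcal{T}}j$ and $j\leq_{\mathcal{T}}i$; $i<_{\mathcal{T}}j$ iff $i\leq_{\mathcal{T}}j$ and not $j\leq_{\mathcal{T}}i$. A packed word of length $n$ is a word $f=f(1)\ldots f(n)$ of positive integers with $\{f(1),\ldots,f(n)\}=\{1,\ldots,\max f\}$. A (strict) T-partition of $\mathcal{T}$ is a packed word $g$ of length $n$ such that: $i\leq_{\mathcal{T}}j\Rightarrow g(i)\leq g(j)$; $i<_{\mathcal{T}}j$ and $i>j\Rightarrow g(i)<g(j)$; if $i<j<k$, $i\sim_{\mathcal{T}}k$ and $g(i)=g(j)=g(k)$ then $i\sim_{\mathcal{T}}j$ and $j\sim_{\mathcal{T}}k$; $\mathcal{P}_s(\mathcal{T})$ is their set. A linear extension of $\mathcal{T}$ is a packed word $f$ of length $n$ with $f(i)=f(j)\Leftrightarrow i\sim_{\mathcal{T}}j$ and $i<_{\mathcal{T}}j\Rightarrow f(i)<f(j)$; $\mathcal{L}(\mathcal{T})$ is their set. For packed words $f,g$ of length $n$, $g\leq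 f$ means: for all $i,j$, $f(i)\leq f(j)\Rightarrow g(i)\leq g(j)$; $f(i)>f(j)$ and $i<j\Rightarrow g(i)>g(j)$; $f(i)=f(j)\Rightarrow g(i)=g(j)$ (the $g$ in the middle union range over packed words of length $n$). For a packed word $f$, $\mathcal{T}_f$ is the topology on $[n]$ with preorder $i\leq j$ iff $f(i)\leq f(j)$. *)

theory Defs
  imports "HOL-Analysis.Abstract_Topology" "HOL-Library.Disjoint_Sets"
begin

text \<open>Words of length n are functions nat => nat; only the values on {1..n} matter,
  and we normalise them to be 0 outside {1..n} so that sets of words are well defined.\<close>

definition packed :: "nat \<Rightarrow> (nat \<Rightarrow> nat) \<Rightarrow> bool" where
  "packed n f \<longleftrightarrow> (\<forall>i. i \<notin> {1..n} \<longrightarrow> f i = 0) \<and> (\<exists>m. f ` {1..n} = {1..m})"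

definition leT :: "nat topology \<Rightarrow> nat \<Rightarrow> nat \<Rightarrow> bool" where
  "leT T i j \<longleftrightarrow> (\<forall>U. openin T U \<longrightarrow> i \<in> U \<longrightarrow> j \<in> U)"

definition simT :: "nat topology \<Rightarrow> nat \<Rightarrow> nat \<Rightarrow> bool" where
  "simT T i j \<longleftrightarrow> leT T i j \<and> leT T j i"

definition ltT :: "nat topology \<Rightarrow> nat \<Rightarrow> nat \<Rightarrow> bool" where
  "ltT T i j \<longleftrightarrow> leT T i j \<and> \<not> leT T j i"

definition Tpartitions :: "nat \<Rightarrow> nat topology \<Rightarrow> (nat \<Rightarrow> nat) set" where
  "Tpartitions n T = {g. packed n g
     \<and> (\<forall>i\<in>{1..n}. \<forall>j\<in>{1..n}. leT T i j \<longrightarrow> g i \<le> g j)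
     \<and> (\<forall>i\<in>{1..n}. \<forall>j\<in>{1..n}. ltT T i j \<and> i > j \<longrightarrow> g i < g j)
     \<and> (\<forall>i\<in>{1..n}. \<forall>j\<in>{1..n}. \<forall>k\<in>{1..n}.
          i < j \<and> j < k \<and> simT T i k \<and> g i = g j \<and> g j = g k
          \<longrightarrow> simT T i j \<and> simT T j k)}"

definition linext :: "nat \<Rightarrow> nat topology \<Rightarrow> (nat \<Rightarrow> nat) set" where
  "linext n T = {f. packed n f
     \<and> (\<forall>i\<in>{1..n}. \<forall>j\<in>{1..n}. f i = f j \<longleftrightarrow> simT T i j)
     \<and> (\<forall>i\<in>{1..n}. \<forall>j\<in>{1..n}. ltT T i j \<longrightarrow> f i < f j)}"

definition word_le :: "nat \<Rightarrow> (nat \<Rightarrow> nat) \<Rightarrow> (nat \<Rightarrow> nat) \<Rightarrow> bool" where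
  "word_le n g f \<longleftrightarrow> (\<forall>i\<in>{1..n}. \<forall>j\<in>{1..n}.
       (f i \<le> f j \<longrightarrow> g i \<le> g j)
     \<and> (f i > f j \<and> i < j \<longrightarrow> g i > g j)
     \<and> (f i = f j \<longrightarrow> g i = g j))"

definition topology_of_word :: "nat \<Rightarrow> (nat \<Rightarrow> nat) \<Rightarrow> nat topology" where
  "topology_of_word n f = topology (\<lambda>U. U \<subseteq> {1..n}
      \<and> (\<forall>i\<in>U. \<forall>j\<in>{1..n}. f i \<le> f j \<longrightarrow> j \<in> U))"

end

theory Submission
  imports Defs "HOL-Library.Product_Lexorder"
begin

(*
  Every T-partition g lies below exactly one linear extension of T.  Sorting the points by g and
  breaking ties by the least element of the \<sim>T-class yields a linear extension above g; two
  distinct linear extensions above g would order some pair i, j oppositely, forcing g i = g j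
  from the weak conditions and g i \<noteq> g j from the strict condition on the inverted pair.
  Conversely, a packed word below a linear extension inherits the T-partition conditions from it.
  Since f is the unique linear extension of T_f, the first decomposition applied to T_f
  identifies {g. g \<le> f} with the T_f-partitions.
*)

lemma leT_refl: "leT T i i"
  by (simp add: leT_def)

lemma leT_trans: "leT T i j \<Longrightarrow> leT T j k \<Longrightarrow> leT T i k"
  by (simp add: leT_def)

lemma simT_refl: "simT T i i"
  by (simp add: simT_def leT_refl)

lemma simT_sym: "simT T i j \<Longrightarrow> simT T j i"
  by (simp add: simT_def)

lemma simT_trans: "simT T i j \<Longrightarrow> simT T j k \<Longrightarrow> simT T i k"
  by (meson leT_trans simT_def)

lemma leT_topology_of_word:
  assumes "i \<in> {1..n}" "j \<in> {1..n}"
  shows "leT (topology_of_word n f) i j \<longleftrightarrow> f i \<le> f j"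
proof -
  define up where "up U \<longleftrightarrow> U \<subseteq> {1..n} \<and> (\<forall>i\<in>U. \<forall>j\<in>{1..n}. f i \<le> f j \<longrightarrow> j \<in> U)"
    for U
  have "istopology up"
    unfolding istopology_def up_def by blast
  then have open_eq: "openin (topology_of_word n f) = up"
    unfolding topology_of_word_def up_def [abs_def] by simp
  show ?thesis
  proof
    assume "leT (topology_of_word n f) i j"
    moreover have "up {k \<in> {1..n}. f i \<le> f k}"
      unfolding up_def by auto
    ultimately show "f i \<le> f j"
      using assms unfolding leT_def open_eq by auto
  next
    assume "f i \<le> f j"
    then show "leT (topology_of_word n f) i j"
      using assms unfolding leT_def open_eq up_def by auto
  qed
qed

lemma simT_topology_of_word:
  "i \<in> {1..n} \<Longrightarrow> j \<in> {1..n} \<Longrightarrow> simT (topology_of_word n f) i j \<longleftrightarrow> f i = f j"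
  by (auto simp: simT_def leT_topology_of_word)

lemma ltT_topology_of_word:
  "i \<in> {1..n} \<Longrightarrow> j \<in> {1..n} \<Longrightarrow> ltT (topology_of_word n f) i j \<longleftrightarrow> f i < f j"
  by (auto simp: ltT_def leT_topology_of_word)

lemma card_image_eq_if_same_kernel:
  assumes "\<And>x y. x \<in> A \<Longrightarrow> y \<in> A \<Longrightarrow> f x = f y \<longleftrightarrow> g x = g y"
  shows "card (f ` A) = card (g ` A)"
proof -
  let ?P = "(\<lambda>x. (f x, g x)) ` A"
  have "inj_on fst ?P" "inj_on snd ?P"
    using assms by (auto simp: inj_on_def)
  then have "card (fst ` ?P) = card (snd ` ?P)"
    by (simp add: card_image)
  then show ?thesis
    by (simp add: image_image)
qed

definition pack :: "nat \<Rightarrow> (nat \<Rightarrow> 'a::linorder) \<Rightarrow> nat \<Rightarrow> nat" where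
  "pack n k i = (if i \<in> {1..n} then card {v \<in> k ` {1..n}. v \<le> k i} else 0)"

lemma pack_outside: "i \<notin> {1..n} \<Longrightarrow> pack n k i = 0"
  unfolding pack_def by (rule if_not_P)

lemma pack_le_iff:
  assumes "i \<in> {1..n}" "j \<in> {1..n}"
  shows "pack n k i \<le> pack n k j \<longleftrightarrow> k i \<le> k j"
proof
  assume "k i \<le> k j"
  then show "pack n k i \<le> pack n k j"
    using assms unfolding pack_def by (auto intro: card_mono)
next
  assume "pack n k i \<le> pack n k j"
  show "k i \<le> k j"
  proof (rule ccontr)
    assume "\<not> k i \<le> k j"
    then have "{v \<in> k ` {1..n}. v \<le> k j} \<subset> {v \<in> k ` {1..n}. v \<le> k i}"
      using assms by auto
    then have "pack n k j < pack n k i"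
      using assms unfolding pack_def by (simp add: psubset_card_mono)
    with \<open>pack n k i \<le> pack n k j\<close> show False
      by simp
  qed
qed

lemma pack_eq_iff:
  "i \<in> {1..n} \<Longrightarrow> j \<in> {1..n} \<Longrightarrow> pack n k i = pack n k j \<longleftrightarrow> k i = k j"
  by (metis pack_le_iff order_antisym order_refl)

lemma pack_less_iff:
  "i \<in> {1..n} \<Longrightarrow> j \<in> {1..n} \<Longrightarrow> pack n k i < pack n k j \<longleftrightarrow> k i < k j"
  by (meson pack_le_iff not_le)

lemma pack_eq_card_image:
  assumes "i \<in> {1..n}"
  shows "pack n k i = card (k ` {j \<in> {1..n}. k j \<le> k i})"
proof -
  have "{v \<in> k ` {1..n}. v \<le> k i} = k ` {j \<in> {1..n}. k j \<le> k i}"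
    by auto
  then show ?thesis
    using assms by (simp add: pack_def)
qed

lemma packed_pack: "packed n (pack n k)"
proof -
  have "pack n k ` {1..n} = {1..card (k ` {1..n})}"
  proof (rule card_subset_eq)
    show "pack n k ` {1..n} \<subseteq> {1..card (k ` {1..n})}"
    proof
      fix p
      assume "p \<in> pack n k ` {1..n}"
      then obtain i where i: "i \<in> {1..n}" "p = card {v \<in> k ` {1..n}. v \<le> k i}"
        unfolding pack_def by auto
      then have "k i \<in> {v \<in> k ` {1..n}. v \<le> k i}"
        by auto
      moreover have "finite {v \<in> k ` {1..n}. v \<le> k i}"
        by simp
      ultimately have "p \<noteq> 0"
        using i(2) by auto
      moreover have "p \<le> card (k ` {1..n})"
        using i by (auto intro: card_mono)
      ultimately show "p \<in> {1..card (k ` {1..n})}"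
        by simp
    qed
    show "card (pack n k ` {1..n}) = card {1..card (k ` {1..n})}"
      using card_image_eq_if_same_kernel[of "{1..n}" "pack n k" k] by (simp add: pack_eq_iff)
  qed (rule finite_atLeastAtMost)
  moreover have "\<forall>i. i \<notin> {1..n} \<longrightarrow> pack n k i = 0"
    by (simp add: pack_outside)
  ultimately show ?thesis
    unfolding packed_def by (intro conjI exI)
qed

lemma pack_packed:
  assumes "packed n f"
  shows "pack n f = f"
proof
  fix i
  obtain m where m: "f ` {1..n} = {1..m}"
    using assms unfolding packed_def by blast
  show "pack n f i = f i"
  proof (cases "i \<in> {1..n}")
    case True
    then have "f i \<in> {1..m}"
      using m by blast
    then have "{v \<in> f ` {1..n}. v \<le> f i} = {1..f i}"
      using m by auto
    then show ?thesis
      using True unfolding pack_def by simp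
  next
    case False
    moreover have "f i = 0"
      using False assms unfolding packed_def by blast
    ultimately show ?thesis
      by (simp add: pack_outside)
  qed
qed

lemma pack_cong_order:
  assumes "\<And>i j. i \<in> {1..n} \<Longrightarrow> j \<in> {1..n} \<Longrightarrow> k i \<le> k j \<longleftrightarrow> k' i \<le> k' j"
  shows "pack n k = pack n k'"
proof
  fix i
  show "pack n k i = pack n k' i"
  proof (cases "i \<in> {1..n}")
    case True
    let ?B = "{j \<in> {1..n}. k j \<le> k i}"
    have "?B = {j \<in> {1..n}. k' j \<le> k' i}"
      using True assms by blast
    moreover have "card (k ` ?B) = card (k' ` ?B)"
    proof (rule card_image_eq_if_same_kernel)
      fix x y
      assume "x \<in> ?B" "y \<in> ?B"
      then have "k x \<le> k y \<longleftrightarrow> k' x \<le> k' y" "k y \<le> k x \<longleftrightarrow> k' y \<le> k' x"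
        using assms by auto
      then show "k x = k y \<longleftrightarrow> k' x = k' y"
        by (simp add: order_eq_iff)
    qed
    ultimately show ?thesis
      using True by (simp add: pack_eq_card_image)
  qed (simp add: pack_outside)
qed

lemma packed_eqI:
  assumes "packed n f" "packed n h"
    and "\<And>i j. i \<in> {1..n} \<Longrightarrow> j \<in> {1..n} \<Longrightarrow> f i \<le> f j \<longleftrightarrow> h i \<le> h j"
  shows "f = h"
proof -
  have "pack n f = pack n h"
    using assms(3) by (rule pack_cong_order)
  then show ?thesis
    using assms(1,2) by (simp add: pack_packed)
qed
lemma linext_packed: "f \<in> linext n T \<Longrightarrow> packed n f"
  unfolding linext_def by blast

lemma linext_eq_iff:
  "f \<in> linext n T \<Longrightarrow> i \<in> {1..n} \<Longrightarrow> j \<in> {1..n} \<Longrightarrow> f i = f j \<longleftrightarrow> simT T i j"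
  unfolding linext_def by blast

lemma linext_less:
  "f \<in> linext n T \<Longrightarrow> i \<in> {1..n} \<Longrightarrow> j \<in> {1..n} \<Longrightarrow> ltT T i j \<Longrightarrow> f i < f j"
  unfolding linext_def by blast

lemma linext_le:
  assumes "f \<in> linext n T" "i \<in> {1..n}" "j \<in> {1..n}" "leT T i j"
  shows "f i \<le> f j"
proof (cases "leT T j i")
  case True
  with assms have "f i = f j"
    by (simp add: linext_eq_iff simT_def)
  then show ?thesis
    by simp
next
  case False
  with assms show ?thesis
    by (simp add: linext_less ltT_def less_imp_le)
qed

lemma Tpartition_packed: "g \<in> Tpartitions n T \<Longrightarrow> packed n g"
  unfolding Tpartitions_def by blast

lemma Tpartition_mono:
  "g \<in> Tpartitions n T \<Longrightarrow> i \<in> {1..n} \<Longrightarrow> j \<in> {1..n} \<Longrightarrow> leT T i j \<Longrightarrow> g i \<le> g j"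
  unfolding Tpartitions_def by blast

lemma Tpartition_inversion:
  "g \<in> Tpartitions n T \<Longrightarrow> i \<in> {1..n} \<Longrightarrow> j \<in> {1..n} \<Longrightarrow> ltT T i j \<Longrightarrow> j < i
    \<Longrightarrow> g i < g j"
  unfolding Tpartitions_def by blast

lemma Tpartition_convex:
  "g \<in> Tpartitions n T \<Longrightarrow> i \<in> {1..n} \<Longrightarrow> j \<in> {1..n} \<Longrightarrow> k \<in> {1..n}
    \<Longrightarrow> i < j \<Longrightarrow> j < k \<Longrightarrow> simT T i k \<Longrightarrow> g i = g j \<Longrightarrow> g j = g k \<Longrightarrow> simT T i j"
  unfolding Tpartitions_def by blast

lemma Tpartition_simT:
  "g \<in> Tpartitions n T \<Longrightarrow> i \<in> {1..n} \<Longrightarrow> j \<in> {1..n} \<Longrightarrow> simT T i j \<Longrightarrow> g i = g j"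
  by (meson Tpartition_mono order_antisym simT_def)

definition class_min :: "nat \<Rightarrow> nat topology \<Rightarrow> nat \<Rightarrow> nat" where
  "class_min n T i = Min {k \<in> {1..n}. simT T i k}"

lemma class_min:
  assumes "i \<in> {1..n}"
  shows "class_min n T i \<in> {1..n}" "simT T i (class_min n T i)" "class_min n T i \<le> i"
proof -
  have "i \<in> {k \<in> {1..n}. simT T i k}"
    using assms simT_refl by blast
  moreover have "finite {k \<in> {1..n}. simT T i k}"
    by simp
  ultimately have "class_min n T i \<in> {k \<in> {1..n}. simT T i k}" "class_min n T i \<le> i"
    unfolding class_min_def by (metis Min_in empty_iff, simp)
  then show "class_min n T i \<in> {1..n}" "simT T i (class_min n T i)" "class_min n T i \<le> i"
    by auto
qed

lemma class_min_eq_iff: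
  assumes "i \<in> {1..n}" "j \<in> {1..n}"
  shows "class_min n T i = class_min n T j \<longleftrightarrow> simT T i j"
proof
  assume "class_min n T i = class_min n T j"
  then show "simT T i j"
    using class_min(2)[OF assms(1)] class_min(2)[OF assms(2)] by (metis simT_sym simT_trans)
next
  assume "simT T i j"
  then have "{k \<in> {1..n}. simT T i k} = {k \<in> {1..n}. simT T j k}"
    by (meson simT_sym simT_trans)
  then show "class_min n T i = class_min n T j"
    unfolding class_min_def by simp
qed

lemma Tpartition_class_min_less:
  assumes g: "g \<in> Tpartitions n T" and ij: "i \<in> {1..n}" "j \<in> {1..n}"
    and "g i = g j" "i < j" "class_min n T j < class_min n T i"
  shows "simT T i j"
proof -
  let ?a = "class_min n T j"
  have a: "?a \<in> {1..n}" "simT T j ?a"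
    using class_min[OF ij(2)] by auto
  have "?a < i"
    using assms(6) class_min(3)[of i n T] ij(1) by linarith
  moreover have "g ?a = g i"
    using Tpartition_simT[OF g ij(2) a(1) a(2)] \<open>g i = g j\<close> by simp
  ultimately have "simT T ?a i"
    using Tpartition_convex[OF g a(1) ij] a(2) \<open>g i = g j\<close> \<open>i < j\<close> simT_sym by metis
  with a(2) show ?thesis
    by (meson simT_sym simT_trans)
qed

text \<open>Sort by g, breaking ties by the least element of the \<sim>T-class; the strictness and
  convexity conditions on g are exactly what makes this a linear extension of T.\<close>

definition linext_above :: "nat \<Rightarrow> nat topology \<Rightarrow> (nat \<Rightarrow> nat) \<Rightarrow> nat \<Rightarrow> nat" where
  "linext_above n T g = pack n (\<lambda>i. (g i, class_min n T i))"

lemma linext_above_linext: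
  assumes g: "g \<in> Tpartitions n T"
  shows "linext_above n T g \<in> linext n T"
proof -
  let ?f = "linext_above n T g"
  have "?f i = ?f j \<longleftrightarrow> simT T i j" if ij: "i \<in> {1..n}" "j \<in> {1..n}" for i j
    using Tpartition_simT[OF g ij] class_min_eq_iff[OF ij]
    by (auto simp: linext_above_def pack_eq_iff[OF ij])
  moreover have "?f i < ?f j" if ij: "i \<in> {1..n}" "j \<in> {1..n}" and "ltT T i j" for i j
  proof -
    have "g i \<le> g j" "\<not> simT T i j"
      using Tpartition_mono[OF g ij] \<open>ltT T i j\<close> by (auto simp: ltT_def simT_def)
    moreover have "class_min n T i < class_min n T j" if "g i = g j"
    proof -
      have "i \<noteq> j"
        using \<open>\<not> simT T i j\<close> simT_refl by blast
      moreover have "\<not> j < i"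
        using Tpartition_inversion[OF g ij \<open>ltT T i j\<close>] that by auto
      ultimately have "i < j"
        by simp
      then show ?thesis
        using Tpartition_class_min_less[OF g ij that] class_min_eq_iff[OF ij]
          \<open>\<not> simT T i j\<close> by (meson linorder_neqE_nat)
    qed
    ultimately show ?thesis
      by (auto simp: linext_above_def pack_less_iff[OF ij] le_less)
  qed
  ultimately show ?thesis
    unfolding linext_def linext_above_def using packed_pack by blast
qed

lemma word_le_linext_above:
  assumes g: "g \<in> Tpartitions n T"
  shows "word_le n g (linext_above n T g)"
  unfolding word_le_def
proof (intro ballI conjI impI)
  fix i j
  assume ij: "i \<in> {1..n}" "j \<in> {1..n}"
  let ?f = "linext_above n T g"
  show "g i \<le> g j" if "?f i \<le> ?f j"
    using that by (auto simp: linext_above_def pack_le_iff[OF ij])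
  show "g i = g j" if "?f i = ?f j"
    using that by (auto simp: linext_above_def pack_eq_iff[OF ij])
  show "g j < g i" if "?f j < ?f i \<and> i < j"
  proof -
    have "g j < g i \<or> g j = g i \<and> class_min n T j < class_min n T i"
      using that by (auto simp: linext_above_def pack_less_iff[OF ij(2,1)])
    moreover have "\<not> (g i = g j \<and> class_min n T j < class_min n T i)"
      using Tpartition_class_min_less[OF g ij] class_min_eq_iff[OF ij, where T = T] that
      by fastforce
    ultimately show ?thesis
      by auto
  qed
qed

lemma word_le_linext_imp_Tpartition:
  assumes f: "f \<in> linext n T" and "packed n g" and w: "word_le n g f"
  shows "g \<in> Tpartitions n T"
proof -
  have "g i \<le> g j" if ij: "i \<in> {1..n}" "j \<in> {1..n}" and "leT T i j" for i j
    using linext_le[OF f ij \<open>leT T i j\<close>] w ij unfolding word_le_def by blast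
  moreover have "g i < g j" if ij: "i \<in> {1..n}" "j \<in> {1..n}" and "ltT T i j" "j < i" for i j
    using linext_less[OF f ij \<open>ltT T i j\<close>] w ij \<open>j < i\<close> unfolding word_le_def by blast
  moreover have "simT T i j \<and> simT T j k"
    if ijk: "i \<in> {1..n}" "j \<in> {1..n}" "k \<in> {1..n}"
      and "i < j" "j < k" "simT T i k" "g i = g j" "g j = g k" for i j k
  proof -
    have "f i = f k"
      using linext_eq_iff[OF f ijk(1,3)] \<open>simT T i k\<close> by blast
    moreover have "\<not> f j < f i" "\<not> f k < f j"
      using w ijk that(4-8) unfolding word_le_def by (metis less_irrefl)+
    ultimately have "f i = f j" "f j = f k"
      by auto
    then show ?thesis
      using linext_eq_iff[OF f ijk(1,2)] linext_eq_iff[OF f ijk(2,3)] by blast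
  qed
  ultimately show ?thesis
    unfolding Tpartitions_def using \<open>packed n g\<close> by blast
qed

lemma word_le_opposite_strict:
  assumes "word_le n g f" "word_le n g h" "i \<in> {1..n}" "j \<in> {1..n}"
    and "f i < f j" "h j < h i"
  shows False
proof -
  have "g i \<le> g j" "g j \<le> g i"
    using assms unfolding word_le_def by (meson less_imp_le)+
  moreover have "i \<noteq> j"
    using assms(5,6) by auto
  moreover have "i < j \<Longrightarrow> g j < g i" "j < i \<Longrightarrow> g i < g j"
    using assms unfolding word_le_def by blast+
  ultimately show False
    by linarith
qed

lemma word_le_linext_unique:
  assumes f: "f \<in> linext n T" and h: "h \<in> linext n T"
    and "word_le n g f" "word_le n g h"
  shows "f = h"
proof (rule packed_eqI[OF linext_packed[OF f] linext_packed[OF h]])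
  fix i j
  assume ij: "i \<in> {1..n}" "j \<in> {1..n}"
  have "f i = f j \<longleftrightarrow> h i = h j"
    using linext_eq_iff[OF f ij] linext_eq_iff[OF h ij] by simp
  moreover have "\<not> (f i < f j \<and> h j < h i)" "\<not> (h i < h j \<and> f j < f i)"
    using word_le_opposite_strict[OF assms(3,4) ij] word_le_opposite_strict[OF assms(4,3) ij]
    by blast+
  ultimately show "f i \<le> f j \<longleftrightarrow> h i \<le> h j"
    by linarith
qed

lemma Tpartitions_eq_UN_word_le:
  "Tpartitions n T = (\<Union>f\<in>linext n T. {g. packed n g \<and> word_le n g f})"
proof
  show "Tpartitions n T \<subseteq> (\<Union>f\<in>linext n T. {g. packed n g \<and> word_le n g f})"
  proof
    fix g
    assume g: "g \<in> Tpartitions n T"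
    show "g \<in> (\<Union>f\<in>linext n T. {g. packed n g \<and> word_le n g f})"
      using linext_above_linext[OF g] word_le_linext_above[OF g] Tpartition_packed[OF g] by blast
  qed
  show "(\<Union>f\<in>linext n T. {g. packed n g \<and> word_le n g f}) \<subseteq> Tpartitions n T"
    by (auto intro: word_le_linext_imp_Tpartition)
qed

lemma disjoint_family_on_word_le:
  "disjoint_family_on (\<lambda>f. {g. packed n g \<and> word_le n g f}) (linext n T)"
  unfolding disjoint_family_on_def by (auto dest: word_le_linext_unique)

lemma linext_topology_of_word:
  assumes "packed n f"
  shows "linext n (topology_of_word n f) = {f}"
proof -
  have "f \<in> linext n (topology_of_word n f)"
    using assms by (simp add: linext_def simT_topology_of_word ltT_topology_of_word)
  moreover have "f' = f" if f': "f' \<in> linext n (topology_of_word n f)" for f'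
  proof (rule packed_eqI[OF linext_packed[OF f'] assms])
    fix i j
    assume ij: "i \<in> {1..n}" "j \<in> {1..n}"
    have "f' i = f' j \<longleftrightarrow> f i = f j"
      using linext_eq_iff[OF f' ij] simT_topology_of_word[OF ij] by simp
    moreover have "f i < f j \<Longrightarrow> f' i < f' j" "f j < f i \<Longrightarrow> f' j < f' i"
      using linext_less[OF f'] ij by (simp_all add: ltT_topology_of_word)
    ultimately show "f' i \<le> f' j \<longleftrightarrow> f i \<le> f j"
      by linarith
  qed
  ultimately show ?thesis
    by blast
qed

lemma Tpartitions_topology_of_word:
  "packed n f \<Longrightarrow> Tpartitions n (topology_of_word n f) = {g. packed n g \<and> word_le n g f}"
  using Tpartitions_eq_UN_word_le[of n "topology_of_word n f"] by (simp add: linext_topology_of_word)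

theorem corollary20:
  fixes n :: nat and T :: "nat topology"
  assumes "topspace T = {1..n}"
  shows "Tpartitions n T = (\<Union>f\<in>linext n T. {g. packed n g \<and> word_le n g f})
       \<and> disjoint_family_on (\<lambda>f. {g. packed n g \<and> word_le n g f}) (linext n T)
       \<and> Tpartitions n T = (\<Union>f\<in>linext n T. Tpartitions n (topology_of_word n f))
       \<and> disjoint_family_on (\<lambda>f. Tpartitions n (topology_of_word n f)) (linext n T)"
proof -
  have Tpartitions_T_f: "Tpartitions n (topology_of_word n f) = {g. packed n g \<and> word_le n g f}"
    if "f \<in> linext n T" for f
    using that by (simp add: Tpartitions_topology_of_word linext_packed)
  then have "(\<Union>f\<in>linext n T. Tpartitions n (topology_of_word n f))
      = (\<Union>f\<in>linext n T. {g. packed n g \<and> word_le n g f})"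
    by (rule SUP_cong[OF refl])
  moreover have "disjoint_family_on (\<lambda>f. Tpartitions n (topology_of_word n f)) (linext n T)"
    using disjoint_family_on_word_le by (rule disjoint_family_on_bisimulation) (simp add: Tpartitions_T_f)
  ultimately show ?thesis
    using Tpartitions_eq_UN_word_le disjoint_family_on_word_le by simp
qed

end
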